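(* Assume (A1), (A2), (A4), (A5), (A6) and (A7) of the context. Then for $1\le k,\ell\le d$, $$\frac1{\sqrt n}\sum_{i=1}^n\Big\{R_{b_n,k}(Y_i)R_{b_n,\ell}(Y_i)+\frac{X_{i\ell}R_{b_n,k}(Y_i)f(Y_i)}{2f_{b_n}(Y_i)}+\frac{X_{ik}R_{b_n,\ell}(Y_i)f(Y_i)}{2f_{b_n}(Y_i)}$$ $$-\mathbb{E}\Big[R_{b_n,k}(Y)R_{b_n,\ell}(Y)+\frac{X_\ell R_{b_n,k}(Y)f(Y)}{2f_{b_n}(Y)}+\frac{X_kR_{b_n,\ell}(Y)f(Y)}{2f_{b_n}(Y)}\Big]\Big\}$$ $$=\frac1{\sqrt n}\sum_{i=1}^n\Big\{R_k(Y_i)R_\ell(Y_i)+\tfrac12X_{i\ell}R_k(Y_i)+\tfrac12X_{ik}R_\ell(Y_i)-2\,\mathbb{E}\big[R_k(Y)R_\ell(Y)\big]\Big\}+o_p(1).$$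
   Context: Setting. $X=(X_1,\dots,X_d)^T$ is an $\mathbb{R}^d$-valued random vector and $Y$ a real random variable with density $f>0$ on $\mathbb{R}$; each $(X_j,Y)$ has joint density $f_{(X_j,Y)}$; $g_j(y)=\int xf_{(X_j,Y)}(x,y)dx$, $R_j=g_j/f$ (so $R_j(y)=\mathbb{E}(X_j\mid Y=y)$); $f,g_j\in L^2(\mathbb{R})$. $\{(X^{(i)},Y_i)\}_{i=1}^n$ i.i.d. sample of $(X,Y)$, $X^{(i)}=(X_{i1},\dots,X_{id})^T$. $\varphi$ father wavelet, $\psi$ associated mother wavelet forming (via $\varphi(\cdot-k)$, $2^{\ell/2}\psi(2^\ell\cdot-k)$) an orthonormal basis of $L^2(\mathbb{R})$; $K(x,y)=\sum_k\varphi(x-k)\varphi(y-k)$. $(j_n)$ increasing integers tending to $\infty$. $(b_n)$ positive, $b_n\to0$; $f_{b_n}=\max(f,b_n)$, $R_{b_n,j}=g_j/f_{b_n}$. $u_n\sim v_n$ means $u_n/v_n$ bounded away from $0$ and $\infty$ for large $n$. Assumptions. (A1) $\|X\|\le G$ for some $G>0$. (A2) $f,g_j$ three times differentiable; there exist a neighborhood $U$ of $0$ and $c>0$ with $|f^{(3)}(y+u)-f^{(3)}(y)|\le c|u|$, $|g_j^{(3)}(y+u)-g_j^{(3)}(y)|\le c|u|$ for all $y$, $u\in U$, $j$. (A4) $\varphi,\psi$ bounded, compactly supported. (A5) $|K(x,y)|\le\Phi(x-y)$, $\Phi\ge0$ bounded, compactly supported, symmetric, $\int u^2\Phi^2<\infty$,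 $\int|u|^k\Phi<\infty$ for $k\in\{0,1,4\}$; $\int K(x,y)(y-x)^kdy=0$ for all $x$, $k\in\{1,2,3\}$. (A6) $2^{-j_n}\sim n^{-c_1}$, $b_n\sim n^{-c_2}$, $0<c_2<1/10$, $1/8+c_2/4<c_1<1/4-c_2$. (A7) $\mathbb{E}[R_j^2(Y)]<\infty$ for all $j$, and $\sqrt n\,\mathbb{E}[|R_k(Y)R_\ell(Y)|\mathbf 1_{\{f(Y)\le a_n\}}]\to0$ for all $k,\ell$ and every positive $(a_n)$ with $a_n\sim b_n$. *)

theory Defs
  imports "HOL-Probability.Probability"
begin

definition L2 :: "(real \<Rightarrow> real) \<Rightarrow> bool" where
  "L2 h \<longleftrightarrow> h \<in> borel_measurable lborel \<and> integrable lborel (\<lambda>x. (h x)^2)"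

definition l2_ip :: "(real \<Rightarrow> real) \<Rightarrow> (real \<Rightarrow> real) \<Rightarrow> real" where
  "l2_ip h1 h2 = (\<integral>x. h1 x * h2 x \<partial>lborel)"

definition wavelet_family ::
  "(real \<Rightarrow> real) \<Rightarrow> (real \<Rightarrow> real) \<Rightarrow> int + (nat \<times> int) \<Rightarrow> real \<Rightarrow> real" where
  "wavelet_family \<phi> \<psi> a = (case a of
      Inl k \<Rightarrow> (\<lambda>x. \<phi> (x - of_int k))
    | Inr lk \<Rightarrow> (\<lambda>x. 2 powr (real (fst lk) / 2) * \<psi> (2 ^ (fst lk) * x - of_int (snd lk))))"

definition is_wavelet_ONB :: "(real \<Rightarrow> real) \<Rightarrow> (real \<Rightarrow> real) \<Rightarrow> bool" where
  "is_wavelet_ONB \<phi> \<psi> \<longleftrightarrow>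
     (\<forall>a. L2 (wavelet_family \<phi> \<psi> a)) \<and>
     (\<forall>a b. l2_ip (wavelet_family \<phi> \<psi> a) (wavelet_family \<phi> \<psi> b) = (if a = b then 1 else 0)) \<and>
     (\<forall>h. L2 h \<and> (\<forall>a. l2_ip h (wavelet_family \<phi> \<psi> a) = 0) \<longrightarrow> (AE x in lborel. h x = 0))"

definition wavelet_kernel :: "(real \<Rightarrow> real) \<Rightarrow> real \<Rightarrow> real \<Rightarrow> real" where
  "wavelet_kernel \<phi> x y = (\<Sum>\<^sub>\<infinity>k::int. \<phi> (x - of_int k) * \<phi> (y - of_int k))"

definition compact_support :: "(real \<Rightarrow> real) \<Rightarrow> bool" where
  "compact_support h \<longleftrightarrow> (\<exists>A. \<forall>x. A < \<bar>x\<bar> \<longrightarrow> h x = 0)"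

definition thrice_differentiable :: "(real \<Rightarrow> real) \<Rightarrow> bool" where
  "thrice_differentiable h \<longleftrightarrow> (\<forall>m<3. \<forall>y. ((deriv ^^ m) h) differentiable (at y))"

definition seq_equiv :: "(nat \<Rightarrow> real) \<Rightarrow> (nat \<Rightarrow> real) \<Rightarrow> bool" where
  "seq_equiv u v \<longleftrightarrow> (\<exists>A B. 0 < A \<and> 0 < B \<and>
      (\<forall>\<^sub>F n in sequentially. A \<le> u n / v n \<and> u n / v n \<le> B))"

definition gfun :: "('d \<Rightarrow> real \<Rightarrow> real \<Rightarrow> real) \<Rightarrow> 'd \<Rightarrow> real \<Rightarrow> real" where
  "gfun fXY j y = (\<integral>x. x * fXY j x y \<partial>lborel)"

definition Rfun :: "(real \<Rightarrow> real) \<Rightarrow> ('d \<Rightarrow> real \<Rightarrow> real \<Rightarrow> real) \<Rightarrow> 'd \<Rightarrow> real \<Rightarrow> real" where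
  "Rfun f fXY j y = gfun fXY j y / f y"

definition Rbfun :: "real \<Rightarrow> (real \<Rightarrow> real) \<Rightarrow> ('d \<Rightarrow> real \<Rightarrow> real \<Rightarrow> real) \<Rightarrow> 'd \<Rightarrow> real \<Rightarrow> real" where
  "Rbfun bn f fXY j y = gfun fXY j y / max (f y) bn"

definition o_p_one :: "'a measure \<Rightarrow> (nat \<Rightarrow> 'a \<Rightarrow> real) \<Rightarrow> bool" where
  "o_p_one M Z \<longleftrightarrow> (\<forall>e>0. (\<lambda>n. measure M {\<omega> \<in> space M. e < \<bar>Z n \<omega>\<bar>}) \<longlonglongrightarrow> 0)"

end

theory Submission
  imports Defs
begin

(* Under (A1) the density of (X_j, Y) vanishes where |x| > G, so |g_j| <= G f and every
   regression function R_j is bounded by G.  With t = f / max f b_n, which lies in (0, 1],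
   the truncated summand is t^2 times the untruncated one; hence their difference is bounded
   and vanishes as soon as b_n < f(Y).  The normalised centred sum of these i.i.d. differences
   has second moment at most E[difference^2], which tends to 0 by dominated convergence, and
   Chebyshev's inequality gives o_p(1).  Finally the tower property E[X_l R_k(Y)] = E[R_l(Y) R_k(Y)]
   identifies the centring of the untruncated sum as 2 E[R_k(Y) R_l(Y)]. *)

lemma AE_comp_of_distributed:
  assumes "distributed M N Y g" and "AE y in N. P y"
  shows "AE \<omega> in M. P (Y \<omega>)"
proof -
  have "AE y in density N g. P y"
    using assms(2) by (subst AE_density[OF distributed_borel_measurable[OF assms(1)]]) (auto elim: eventually_mono)
  then have "AE y in distr M N Y. P y"
    by (simp only: distributed_distr_eq_density[OF assms(1)])
  then show ?thesis
    by (rule AE_distrD[OF distributed_measurable[OF assms(1)]])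
qed

lemma distributed_AE_density_eq_0_outside:
  assumes "distributed M N Z g" and "A \<in> sets N" and "\<forall>\<omega>\<in>space M. Z \<omega> \<in> A"
  shows "AE z in N. z \<notin> A \<longrightarrow> g z = 0"
proof -
  have "{z \<in> space N. z \<in> A} \<in> sets N"
    using assms(2) sets.sets_into_space by (simp add: Int_absorb1 Collect_conj_eq Int_commute)
  then have "AE z in distr M N Z. z \<in> A"
    using assms(3) by (subst AE_distr_iff) (auto intro: distributed_measurable[OF assms(1)])
  then have "AE z in density N g. z \<in> A"
    by (simp only: distributed_distr_eq_density[OF assms(1)])
  then show ?thesis
    by (subst (asm) AE_density[OF distributed_borel_measurable[OF assms(1)]]) (auto elim: eventually_mono)
qed

lemma borel_measurable_gfun:
  assumes joint_dens: "distributed M (lborel \<Otimes>\<^sub>M lborel) (\<lambda>\<omega>. (X \<omega>, Y \<omega>))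
                       (\<lambda>p. ennreal (fXY j (fst p) (snd p)))"
    and fXY_nonneg: "\<forall>x y. 0 \<le> fXY j x y"
  shows "gfun fXY j \<in> borel_measurable borel"
proof -
  have fXY_meas: "(\<lambda>p. fXY j (fst p) (snd p)) \<in> borel_measurable (lborel \<Otimes>\<^sub>M lborel)"
    by (rule distributed_real_measurable[OF _ joint_dens]) (use fXY_nonneg in auto)
  have [measurable]: "(\<lambda>p. fXY j (snd p) (fst p)) \<in> borel_measurable (lborel \<Otimes>\<^sub>M lborel)"
    using measurable_compose[OF measurable_pair_swap' fXY_meas] by (simp add: case_prod_beta')
  show ?thesis
    unfolding gfun_def by measurable
qed

lemma AE_joint_density_eq_0_beyond_bound:
  fixes h :: "real \<Rightarrow> real \<Rightarrow> real"
  assumes joint_dens: "distributed M (lborel \<Otimes>\<^sub>M lborel) (\<lambda>\<omega>. (X \<omega>, Y \<omega>)) (\<lambda>p. ennreal (h (fst p) (snd p)))"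
    and h_nonneg: "\<forall>x y. 0 \<le> h x y" and X_bound: "\<forall>\<omega>\<in>space M. \<bar>X \<omega>\<bar> \<le> G"
  shows "AE y in lborel. AE x in lborel. G < \<bar>x\<bar> \<longrightarrow> h x y = 0"
proof -
  have [measurable]: "(\<lambda>p. h (fst p) (snd p)) \<in> borel_measurable (lborel \<Otimes>\<^sub>M lborel)"
    by (rule distributed_real_measurable[OF _ joint_dens]) (use h_nonneg in auto)
  have "{p \<in> space (lborel \<Otimes>\<^sub>M lborel). \<bar>fst p\<bar> \<le> G} \<in> sets (lborel \<Otimes>\<^sub>M lborel)"
    by measurable
  then have "AE p in lborel \<Otimes>\<^sub>M lborel. p \<notin> {p. \<bar>fst p\<bar> \<le> G} \<longrightarrow> ennreal (h (fst p) (snd p)) = 0"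
    using X_bound by (intro distributed_AE_density_eq_0_outside[OF joint_dens]) (auto simp: space_pair_measure)
  then have "AE p in lborel \<Otimes>\<^sub>M lborel. G < \<bar>fst p\<bar> \<longrightarrow> h (fst p) (snd p) = 0"
    by (rule eventually_mono) (use h_nonneg in auto)
  moreover have S: "{p \<in> space (lborel \<Otimes>\<^sub>M lborel). G < \<bar>fst p\<bar> \<longrightarrow> h (fst p) (snd p) = 0}
      \<in> sets (lborel \<Otimes>\<^sub>M lborel)"
    by measurable
  ultimately have "AE x in lborel. AE y in lborel. G < \<bar>x\<bar> \<longrightarrow> h x y = 0"
    using lborel_pair.AE_pair_iff[OF S] by simp
  then show ?thesis
    using lborel_pair.AE_commute[OF S] by simp
qed

lemma AE_abs_gfun_le:
  assumes "prob_space M"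
    and Y_dens: "distributed M lborel Y (\<lambda>y. ennreal (f y))"
    and joint_dens: "distributed M (lborel \<Otimes>\<^sub>M lborel) (\<lambda>\<omega>. (X \<omega>, Y \<omega>))
                       (\<lambda>p. ennreal (fXY j (fst p) (snd p)))"
    and fXY_nonneg: "\<forall>x y. 0 \<le> fXY j x y" and f_nonneg: "\<forall>y. 0 \<le> f y"
    and X_bound: "\<forall>\<omega>\<in>space M. \<bar>X \<omega>\<bar> \<le> G"
  shows "AE y in lborel. \<bar>gfun fXY j y\<bar> \<le> G * f y"
proof -
  interpret prob_space M by fact
  have fXY_meas: "(\<lambda>p. fXY j (fst p) (snd p)) \<in> borel_measurable (lborel \<Otimes>\<^sub>M lborel)"
    by (rule distributed_real_measurable[OF _ joint_dens]) (use fXY_nonneg in auto)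
  have [measurable]: "(\<lambda>x. fXY j x y) \<in> borel_measurable lborel" for y
    using measurable_compose[OF measurable_Pair2'[of y lborel lborel] fXY_meas] by simp
  have G: "0 \<le> G"
    using X_bound not_empty by (meson abs_ge_zero all_not_in_conv order_trans)
  have support: "AE y in lborel. AE x in lborel. G < \<bar>x\<bar> \<longrightarrow> fXY j x y = 0"
    by (rule AE_joint_density_eq_0_beyond_bound[OF joint_dens fXY_nonneg X_bound])
  have marginal: "AE y in lborel. ennreal (f y) = (\<integral>\<^sup>+x. ennreal (fXY j x y) \<partial>lborel)"
    using distributed_marginal_eq_joint2[OF lborel.sigma_finite_measure_axioms
        lborel.sigma_finite_measure_axioms Y_dens joint_dens] by simp
  show ?thesis
    using support marginal
  proof eventually_elim
    case (elim y)
    have "(\<integral>\<^sup>+x. ennreal (norm (x * fXY j x y)) \<partial>lborel) \<le> (\<integral>\<^sup>+x. G * ennreal (fXY j x y) \<partial>lborel)"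
      using elim(1)
    proof (intro nn_integral_mono_AE, eventually_elim)
      case (elim x)
      then show ?case
        using fXY_nonneg G
        by (cases "G < \<bar>x\<bar>") (auto simp: abs_mult ennreal_mult[symmetric] intro!: ennreal_leI mult_right_mono)
    qed
    also have "\<dots> = G * ennreal (f y)"
      using elim(2) by (subst nn_integral_cmult) auto
    also have "\<dots> = ennreal (G * f y)"
      using G by (simp add: ennreal_mult')
    finally have "(\<integral>x. norm (x * fXY j x y) \<partial>lborel) \<le> G * f y"
      using G f_nonneg by (intro integral_real_bounded) auto
    then show ?case
      using integral_norm_bound[of lborel "\<lambda>x. x * fXY j x y"] unfolding gfun_def real_norm_def
      by linarith
  qed
qed

lemma AE_abs_Rfun_le:
  assumes "prob_space M"
    and Y_dens: "distributed M lborel Y (\<lambda>y. ennreal (f y))" and f_pos: "\<forall>y. 0 < f y"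
    and joint_dens: "distributed M (lborel \<Otimes>\<^sub>M lborel) (\<lambda>\<omega>. (X \<omega>, Y \<omega>))
                       (\<lambda>p. ennreal (fXY j (fst p) (snd p)))"
    and fXY_nonneg: "\<forall>x y. 0 \<le> fXY j x y"
    and X_bound: "\<forall>\<omega>\<in>space M. \<bar>X \<omega>\<bar> \<le> G"
  shows "AE y in lborel. \<bar>Rfun f fXY j y\<bar> \<le> G"
proof -
  have "AE y in lborel. \<bar>gfun fXY j y\<bar> \<le> G * f y"
    by (rule AE_abs_gfun_le[where fXY=fXY and j=j, OF assms(1) Y_dens joint_dens fXY_nonneg _ X_bound])
      (use f_pos in \<open>auto simp: less_imp_le\<close>)
  then show ?thesis
  proof eventually_elim
    case (elim y)
    with f_pos[rule_format, of y] show ?case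
      by (simp add: Rfun_def abs_div pos_divide_le_eq)
  qed
qed

lemma integral_mult_eq_Rfun:
  assumes "prob_space M"
    and Y_dens: "distributed M lborel Y (\<lambda>y. ennreal (f y))" and f_pos: "\<forall>y. 0 < f y"
    and joint_dens: "distributed M (lborel \<Otimes>\<^sub>M lborel) (\<lambda>\<omega>. (X \<omega>, Y \<omega>))
                       (\<lambda>p. ennreal (fXY j (fst p) (snd p)))"
    and fXY_nonneg: "\<forall>x y. 0 \<le> fXY j x y"
    and X_bound: "\<forall>\<omega>\<in>space M. \<bar>X \<omega>\<bar> \<le> G"
    and [measurable]: "h \<in> borel_measurable borel" and h_bound: "AE y in lborel. \<bar>h y\<bar> \<le> C"
  shows "(\<integral>\<omega>. X \<omega> * h (Y \<omega>) \<partial>M) = (\<integral>\<omega>. Rfun f fXY j (Y \<omega>) * h (Y \<omega>) \<partial>M)"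
proof -
  interpret prob_space M by fact
  have XY_meas: "(\<lambda>\<omega>. (X \<omega>, Y \<omega>)) \<in> M \<rightarrow>\<^sub>M lborel \<Otimes>\<^sub>M lborel"
    by (rule distributed_measurable[OF joint_dens])
  then have [measurable]: "X \<in> borel_measurable M" "Y \<in> borel_measurable M"
    by (simp_all add: measurable_pair_iff o_def)
  have [measurable]: "gfun fXY j \<in> borel_measurable borel"
    by (rule borel_measurable_gfun[where fXY=fXY and j=j, OF joint_dens fXY_nonneg])
  have [measurable]: "f \<in> borel_measurable borel"
    using distributed_real_measurable[OF _ Y_dens] f_pos by (simp add: less_imp_le)
  have "AE \<omega> in M. \<bar>X \<omega> * h (Y \<omega>)\<bar> \<le> G * C"
    using AE_comp_of_distributed[OF Y_dens h_bound] AE_space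
    by eventually_elim (use X_bound in \<open>auto simp: abs_mult intro!: mult_mono\<close>)
  then have "integrable M (\<lambda>\<omega>. X \<omega> * h (Y \<omega>))"
    by (intro integrable_const_bound[where B="G * C"]) auto
  then have int: "integrable (lborel \<Otimes>\<^sub>M lborel) (\<lambda>(x, y). fXY j x y * (x * h y))"
    using distributed_integrable[OF joint_dens, of "\<lambda>p. fst p * h (snd p)"] fXY_nonneg
    by (simp add: case_prod_beta')
  have "(\<integral>\<omega>. X \<omega> * h (Y \<omega>) \<partial>M)
      = (\<integral>p. fXY j (fst p) (snd p) * (fst p * h (snd p)) \<partial>(lborel \<Otimes>\<^sub>M lborel))"
    using distributed_integral[OF joint_dens, of "\<lambda>p. fst p * h (snd p)"] fXY_nonneg by simp
  also have "\<dots> = (\<integral>y. (\<integral>x. fXY j x y * (x * h y) \<partial>lborel) \<partial>lborel)"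
    using lborel_pair.integral_snd[OF int] by (simp add: case_prod_beta')
  also have "\<dots> = (\<integral>y. f y * (Rfun f fXY j y * h y) \<partial>lborel)"
  proof (intro Bochner_Integration.integral_cong refl)
    fix y
    have "(\<integral>x. fXY j x y * (x * h y) \<partial>lborel) = gfun fXY j y * h y"
      unfolding gfun_def by (subst integral_mult_left_zero[symmetric]) (simp add: ac_simps)
    then show "(\<integral>x. fXY j x y * (x * h y) \<partial>lborel) = f y * (Rfun f fXY j y * h y)"
      using f_pos[rule_format, of y] by (simp add: Rfun_def)
  qed
  also have "\<dots> = (\<integral>\<omega>. Rfun f fXY j (Y \<omega>) * h (Y \<omega>) \<partial>M)"
    using f_pos by (intro distributed_integral[OF Y_dens]) (auto simp: Rfun_def less_imp_le)
  finally show ?thesis .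
qed

lemma integral_eq_of_distr_eq:
  fixes Z W :: "'a \<Rightarrow> 'b::topological_space" and F :: "'b \<Rightarrow> real"
  assumes "distr M borel Z = distr M borel W"
    and [measurable]: "Z \<in> borel_measurable M" "W \<in> borel_measurable M" "F \<in> borel_measurable borel"
  shows "(\<integral>\<omega>. F (Z \<omega>) \<partial>M) = (\<integral>\<omega>. F (W \<omega>) \<partial>M)"
proof -
  have "(\<integral>\<omega>. F (Z \<omega>) \<partial>M) = integral\<^sup>L (distr M borel Z) F"
    by (rule integral_distr[symmetric]) auto
  also have "\<dots> = (\<integral>\<omega>. F (W \<omega>) \<partial>M)"
    using assms(1) by (simp add: integral_distr)
  finally show ?thesis .
qed

lemma AE_of_distr_eq:
  fixes Z W :: "'a \<Rightarrow> 'b::topological_space"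
  assumes "distr M borel Z = distr M borel W"
    and [measurable]: "Z \<in> borel_measurable M" "W \<in> borel_measurable M" "Measurable.pred borel P"
    and "AE \<omega> in M. P (W \<omega>)"
  shows "AE \<omega> in M. P (Z \<omega>)"
proof -
  have "AE x in distr M borel W. P x"
    using assms(5) by (subst AE_distr_iff) auto
  then have "AE x in distr M borel Z. P x"
    unfolding assms(1) .
  then show ?thesis
    by (subst (asm) AE_distr_iff) auto
qed

lemma integral_square_sum_uncorrelated:
  fixes V :: "'i \<Rightarrow> 'a \<Rightarrow> real"
  assumes "finite I"
    and integrable: "\<And>i j. integrable M (\<lambda>\<omega>. V i \<omega> * V j \<omega>)"
    and uncorrelated: "\<And>i j. i \<noteq> j \<Longrightarrow> (\<integral>\<omega>. V i \<omega> * V j \<omega> \<partial>M) = 0"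
  shows "(\<integral>\<omega>. (\<Sum>i\<in>I. V i \<omega>)\<^sup>2 \<partial>M) = (\<Sum>i\<in>I. \<integral>\<omega>. (V i \<omega>)\<^sup>2 \<partial>M)"
    and "integrable M (\<lambda>\<omega>. (\<Sum>i\<in>I. V i \<omega>)\<^sup>2)"
proof -
  have square: "(\<Sum>i\<in>I. V i \<omega>)\<^sup>2 = (\<Sum>i\<in>I. \<Sum>j\<in>I. V i \<omega> * V j \<omega>)" for \<omega>
    by (simp add: power2_eq_square sum_product)
  have "(\<integral>\<omega>. (\<Sum>i\<in>I. V i \<omega>)\<^sup>2 \<partial>M) = (\<Sum>i\<in>I. \<Sum>j\<in>I. \<integral>\<omega>. V i \<omega> * V j \<omega> \<partial>M)"
    unfolding square by (simp add: integrable_sum integrable)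
  also have "\<dots> = (\<Sum>i\<in>I. \<integral>\<omega>. V i \<omega> * V i \<omega> \<partial>M)"
  proof (rule sum.cong[OF refl])
    fix i
    assume "i \<in> I"
    then show "(\<Sum>j\<in>I. \<integral>\<omega>. V i \<omega> * V j \<omega> \<partial>M) = (\<integral>\<omega>. V i \<omega> * V i \<omega> \<partial>M)"
      using \<open>finite I\<close> by (subst sum.remove[of I i]) (auto intro!: sum.neutral uncorrelated)
  qed
  finally show "(\<integral>\<omega>. (\<Sum>i\<in>I. V i \<omega>)\<^sup>2 \<partial>M) = (\<Sum>i\<in>I. \<integral>\<omega>. (V i \<omega>)\<^sup>2 \<partial>M)"
    by (simp add: power2_eq_square)
  show "integrable M (\<lambda>\<omega>. (\<Sum>i\<in>I. V i \<omega>)\<^sup>2)"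
    unfolding square by (auto intro!: integrable_sum integrable)
qed

lemma iid_centered_sum_square:
  fixes Z :: "nat \<Rightarrow> 'a \<Rightarrow> 'b::topological_space" and W :: "'a \<Rightarrow> 'b" and g :: "'b \<Rightarrow> real"
  assumes "prob_space M"
    and indep: "prob_space.indep_vars M (\<lambda>_. borel) Z UNIV"
    and ident: "\<forall>i. distr M borel (Z i) = distr M borel W"
    and [measurable]: "W \<in> borel_measurable M" "g \<in> borel_measurable borel"
    and bound: "AE \<omega> in M. \<bar>g (W \<omega>)\<bar> \<le> B"
    and "finite I"
  defines "\<mu> \<equiv> \<integral>\<omega>. g (W \<omega>) \<partial>M"
  shows "(\<integral>\<omega>. (\<Sum>i\<in>I. g (Z i \<omega>) - \<mu>)\<^sup>2 \<partial>M) = real (card I) * (\<integral>\<omega>. (g (W \<omega>) - \<mu>)\<^sup>2 \<partial>M)"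
    and "integrable M (\<lambda>\<omega>. (\<Sum>i\<in>I. g (Z i \<omega>) - \<mu>)\<^sup>2)"
proof -
  interpret prob_space M by fact
  define V where "V i \<omega> = g (Z i \<omega>) - \<mu>" for i \<omega>
  have [measurable]: "Z i \<in> borel_measurable M" for i
    using indep by (auto simp: indep_vars_def)
  have [measurable]: "V i \<in> borel_measurable M" for i
    unfolding V_def by measurable
  have integral_V: "(\<integral>\<omega>. F (V i \<omega>) \<partial>M) = (\<integral>\<omega>. F (g (W \<omega>) - \<mu>) \<partial>M)"
    if [measurable]: "F \<in> borel_measurable borel" for F :: "real \<Rightarrow> real" and i
    unfolding V_def by (rule integral_eq_of_distr_eq[OF ident[rule_format]]) measurable
  have Z_bound: "AE \<omega> in M. \<bar>g (Z i \<omega>)\<bar> \<le> B" for i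
    by (rule AE_of_distr_eq[OF ident[rule_format] _ _ _ bound]) measurable
  have V_bound: "AE \<omega> in M. \<bar>V i \<omega>\<bar> \<le> B + \<bar>\<mu>\<bar>" for i
    using Z_bound[of i] by eventually_elim (auto simp: V_def)
  have V_integrable: "integrable M (V i)" for i
    by (rule integrable_const_bound[where B="B + \<bar>\<mu>\<bar>"]) (use V_bound in auto)
  have VV_integrable: "integrable M (\<lambda>\<omega>. V i \<omega> * V j \<omega>)" for i j
  proof (rule integrable_const_bound[where B="(B + \<bar>\<mu>\<bar>) * (B + \<bar>\<mu>\<bar>)"])
    show "AE \<omega> in M. norm (V i \<omega> * V j \<omega>) \<le> (B + \<bar>\<mu>\<bar>) * (B + \<bar>\<mu>\<bar>)"
      using V_bound[of i] V_bound[of j] by eventually_elim (auto simp: abs_mult intro!: mult_mono)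
  qed measurable
  have V_mean: "(\<integral>\<omega>. V i \<omega> \<partial>M) = 0" for i
  proof -
    have "integrable M (\<lambda>\<omega>. g (W \<omega>))"
      by (rule integrable_const_bound[where B=B]) (use bound in auto)
    then show ?thesis
      using integral_V[of "\<lambda>x. x" i] by (simp add: \<mu>_def prob_space)
  qed
  have indep_V: "indep_vars (\<lambda>_. borel) V UNIV"
    unfolding V_def by (rule indep_vars_compose2[OF indep]) measurable
  have "(\<integral>\<omega>. V i \<omega> * V j \<omega> \<partial>M) = 0" if "i \<noteq> j" for i j
  proof -
    have "indep_vars (\<lambda>_. borel) V {i, j}"
      by (rule indep_vars_subset[OF indep_V]) auto
    then have "(\<integral>\<omega>. (\<Prod>k\<in>{i, j}. V k \<omega>) \<partial>M) = (\<Prod>k\<in>{i, j}. \<integral>\<omega>. V k \<omega> \<partial>M)"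
      by (intro indep_vars_lebesgue_integral) (auto intro: V_integrable)
    then show ?thesis
      using that V_mean by simp
  qed
  note sum_square = integral_square_sum_uncorrelated[OF \<open>finite I\<close> VV_integrable this]
  show "(\<integral>\<omega>. (\<Sum>i\<in>I. g (Z i \<omega>) - \<mu>)\<^sup>2 \<partial>M) = real (card I) * (\<integral>\<omega>. (g (W \<omega>) - \<mu>)\<^sup>2 \<partial>M)"
    using sum_square(1) integral_V[of "\<lambda>x. x\<^sup>2"] by (simp add: V_def)
  show "integrable M (\<lambda>\<omega>. (\<Sum>i\<in>I. g (Z i \<omega>) - \<mu>)\<^sup>2)"
    using sum_square(2) by (simp add: V_def)
qed

lemma normalized_iid_sum_second_moment_le:
  fixes Z :: "nat \<Rightarrow> 'a \<Rightarrow> 'b::topological_space" and W :: "'a \<Rightarrow> 'b" and g :: "'b \<Rightarrow> real"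
  assumes "prob_space M"
    and indep: "prob_space.indep_vars M (\<lambda>_. borel) Z UNIV"
    and ident: "\<forall>i. distr M borel (Z i) = distr M borel W"
    and [measurable]: "W \<in> borel_measurable M" "g \<in> borel_measurable borel"
    and bound: "AE \<omega> in M. \<bar>g (W \<omega>)\<bar> \<le> B"
  defines "\<mu> \<equiv> \<integral>\<omega>. g (W \<omega>) \<partial>M"
  shows "(\<integral>\<omega>. (1 / sqrt (real n) * (\<Sum>i\<in>{1..n}. g (Z i \<omega>) - \<mu>))\<^sup>2 \<partial>M) \<le> (\<integral>\<omega>. (g (W \<omega>))\<^sup>2 \<partial>M)"
    and "integrable M (\<lambda>\<omega>. (1 / sqrt (real n) * (\<Sum>i\<in>{1..n}. g (Z i \<omega>) - \<mu>))\<^sup>2)"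
proof -
  interpret prob_space M by fact
  note iid = iid_centered_sum_square[OF \<open>prob_space M\<close> indep ident _ _ bound, of "{1..n}", folded \<mu>_def]
  show "integrable M (\<lambda>\<omega>. (1 / sqrt (real n) * (\<Sum>i\<in>{1..n}. g (Z i \<omega>) - \<mu>))\<^sup>2)"
    unfolding power_mult_distrib using iid(2) by simp
  have "integrable M (\<lambda>\<omega>. g (W \<omega>))"
    by (rule integrable_const_bound[where B=B]) (use bound in auto)
  moreover have "integrable M (\<lambda>\<omega>. (g (W \<omega>))\<^sup>2)"
    using bound by (intro integrable_const_bound[where B="B\<^sup>2"])
      (auto elim!: eventually_mono simp: abs_le_square_iff[symmetric])
  ultimately have variance_le: "variance (\<lambda>\<omega>. g (W \<omega>)) \<le> (\<integral>\<omega>. (g (W \<omega>))\<^sup>2 \<partial>M)"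
    by (simp add: variance_eq)
  have "(\<integral>\<omega>. (1 / sqrt (real n) * (\<Sum>i\<in>{1..n}. g (Z i \<omega>) - \<mu>))\<^sup>2 \<partial>M)
      = (1 / sqrt (real n))\<^sup>2 * (real n * variance (\<lambda>\<omega>. g (W \<omega>)))"
    unfolding power_mult_distrib using iid(1) by (simp add: \<mu>_def)
  also have "\<dots> \<le> variance (\<lambda>\<omega>. g (W \<omega>))"
    using variance_positive by (cases "n = 0") (auto simp: power_divide)
  finally show "(\<integral>\<omega>. (1 / sqrt (real n) * (\<Sum>i\<in>{1..n}. g (Z i \<omega>) - \<mu>))\<^sup>2 \<partial>M) \<le> (\<integral>\<omega>. (g (W \<omega>))\<^sup>2 \<partial>M)"
    using variance_le by linarith
qed

lemma o_p_one_of_second_moment: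
  assumes "prob_space M" and [measurable]: "\<And>n. Z n \<in> borel_measurable M"
    and integrable: "\<And>n. integrable M (\<lambda>\<omega>. (Z n \<omega>)\<^sup>2)"
    and lim: "(\<lambda>n. \<integral>\<omega>. (Z n \<omega>)\<^sup>2 \<partial>M) \<longlonglongrightarrow> 0"
  shows "o_p_one M Z"
  unfolding o_p_one_def
proof (intro allI impI)
  fix e :: real
  assume "0 < e"
  interpret prob_space M by fact
  have bound: "measure M {\<omega> \<in> space M. e < \<bar>Z n \<omega>\<bar>} \<le> (\<integral>\<omega>. (Z n \<omega>)\<^sup>2 \<partial>M) / e\<^sup>2" for n
  proof -
    have "measure M {\<omega> \<in> space M. e < \<bar>Z n \<omega>\<bar>} \<le> measure M {\<omega> \<in> space M. e \<le> \<bar>Z n \<omega>\<bar>}"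
      by (rule finite_measure_mono) (force, measurable)
    also have "\<dots> \<le> (\<integral>\<omega>. (Z n \<omega>)\<^sup>2 \<partial>M) / e\<^sup>2"
      by (rule second_moment_method[OF _ integrable \<open>0 < e\<close>]) measurable
    finally show ?thesis .
  qed
  show "(\<lambda>n. measure M {\<omega> \<in> space M. e < \<bar>Z n \<omega>\<bar>}) \<longlonglongrightarrow> 0"
    by (rule tendsto_sandwich[OF _ _ tendsto_const tendsto_divide_zero[OF lim, of "e\<^sup>2"]])
      (auto intro!: always_eventually simp: bound)
qed

lemma o_p_one_normalized_iid_sum:
  fixes Z :: "nat \<Rightarrow> 'a \<Rightarrow> 'b::topological_space" and W :: "'a \<Rightarrow> 'b" and g :: "nat \<Rightarrow> 'b \<Rightarrow> real"
  assumes "prob_space M"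
    and indep: "prob_space.indep_vars M (\<lambda>_. borel) Z UNIV"
    and ident: "\<forall>i. distr M borel (Z i) = distr M borel W"
    and W_meas[measurable]: "W \<in> borel_measurable M"
    and g_meas[measurable]: "\<And>n. g n \<in> borel_measurable borel"
    and bound: "AE \<omega> in M. \<forall>n. \<bar>g n (W \<omega>)\<bar> \<le> B"
    and lim: "AE \<omega> in M. (\<lambda>n. g n (W \<omega>)) \<longlonglongrightarrow> 0"
  shows "o_p_one M (\<lambda>n \<omega>. 1 / sqrt (real n) * (\<Sum>i\<in>{1..n}. g n (Z i \<omega>) - (\<integral>\<omega>'. g n (W \<omega>') \<partial>M)))"
proof (rule o_p_one_of_second_moment[OF \<open>prob_space M\<close>])
  interpret prob_space M by fact
  have [measurable]: "Z i \<in> borel_measurable M" for i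
    using indep by (auto simp: indep_vars_def)
  have bound_n: "AE \<omega> in M. \<bar>g n (W \<omega>)\<bar> \<le> B" for n
    using bound by eventually_elim auto
  note second_moment = normalized_iid_sum_second_moment_le[OF \<open>prob_space M\<close> indep ident W_meas g_meas bound_n]
  show "(\<lambda>\<omega>. 1 / sqrt (real n) * (\<Sum>i\<in>{1..n}. g n (Z i \<omega>) - (\<integral>\<omega>'. g n (W \<omega>') \<partial>M)))
      \<in> borel_measurable M" for n
    by measurable
  show "integrable M (\<lambda>\<omega>. (1 / sqrt (real n) * (\<Sum>i\<in>{1..n}. g n (Z i \<omega>) - (\<integral>\<omega>'. g n (W \<omega>') \<partial>M)))\<^sup>2)"
    for n
    by (rule second_moment(2))
  have "(\<lambda>n. \<integral>\<omega>. (g n (W \<omega>))\<^sup>2 \<partial>M) \<longlonglongrightarrow> (\<integral>\<omega>. 0 \<partial>M)"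
  proof (rule integral_dominated_convergence[where w="\<lambda>_. B\<^sup>2"])
    show "AE \<omega> in M. (\<lambda>n. (g n (W \<omega>))\<^sup>2) \<longlonglongrightarrow> 0"
      using lim by eventually_elim (auto intro: tendsto_eq_intros)
    show "AE \<omega> in M. norm ((g n (W \<omega>))\<^sup>2) \<le> B\<^sup>2" for n
      using bound_n[of n] by (auto elim!: eventually_mono simp: abs_le_square_iff[symmetric])
  qed auto
  then have square_lim: "(\<lambda>n. \<integral>\<omega>. (g n (W \<omega>))\<^sup>2 \<partial>M) \<longlonglongrightarrow> 0"
    by simp
  show "(\<lambda>n. \<integral>\<omega>. (1 / sqrt (real n) * (\<Sum>i\<in>{1..n}. g n (Z i \<omega>) - (\<integral>\<omega>'. g n (W \<omega>') \<partial>M)))\<^sup>2 \<partial>M)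
      \<longlonglongrightarrow> 0"
    by (rule tendsto_sandwich[OF _ _ tendsto_const square_lim])
      (use second_moment(1) in \<open>auto intro!: always_eventually integral_nonneg_AE\<close>)
qed

definition summand :: "(real \<Rightarrow> real) \<Rightarrow> ('d::finite \<Rightarrow> real \<Rightarrow> real \<Rightarrow> real) \<Rightarrow> 'd \<Rightarrow> 'd \<Rightarrow> real ^ 'd \<Rightarrow> real \<Rightarrow> real"
  where "summand f fXY k l x y = Rfun f fXY k y * Rfun f fXY l y
           + 1/2 * x $ l * Rfun f fXY k y + 1/2 * x $ k * Rfun f fXY l y"

definition truncated_summand ::
    "real \<Rightarrow> (real \<Rightarrow> real) \<Rightarrow> ('d::finite \<Rightarrow> real \<Rightarrow> real \<Rightarrow> real) \<Rightarrow> 'd \<Rightarrow> 'd \<Rightarrow> real ^ 'd \<Rightarrow> real \<Rightarrow> real"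
  where "truncated_summand c f fXY k l x y = Rbfun c f fXY k y * Rbfun c f fXY l y
           + x $ l * Rbfun c f fXY k y * f y / (2 * max (f y) c)
           + x $ k * Rbfun c f fXY l y * f y / (2 * max (f y) c)"

lemma truncated_summand_eq:
  assumes "0 < f y"
  shows "truncated_summand c f fXY k l x y = (f y / max (f y) c)\<^sup>2 * summand f fXY k l x y"
proof -
  have Rbfun_eq: "Rbfun c f fXY j y = f y / max (f y) c * Rfun f fXY j y" for j
    using assms by (simp add: Rbfun_def Rfun_def)
  show ?thesis
    unfolding truncated_summand_def summand_def Rbfun_eq by (simp add: power2_eq_square algebra_simps)
qed

lemma truncated_summand_eq_summand:
  assumes "0 < f y" and "c \<le> f y"
  shows "truncated_summand c f fXY k l x y = summand f fXY k l x y"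
  using assms by (simp add: truncated_summand_eq max_absorb1)

lemma abs_summand_le:
  assumes "\<bar>x $ k\<bar> \<le> G" "\<bar>x $ l\<bar> \<le> G" "\<bar>Rfun f fXY k y\<bar> \<le> G" "\<bar>Rfun f fXY l y\<bar> \<le> G"
  shows "\<bar>summand f fXY k l x y\<bar> \<le> 2 * G\<^sup>2"
proof -
  let ?a = "Rfun f fXY k y * Rfun f fXY l y" and ?b = "x $ l * Rfun f fXY k y"
    and ?c = "x $ k * Rfun f fXY l y"
  have "\<bar>?a\<bar> \<le> G * G" "\<bar>?b\<bar> \<le> G * G" "\<bar>?c\<bar> \<le> G * G"
    using assms by (auto simp: abs_mult intro!: mult_mono)
  moreover have "summand f fXY k l x y = ?a + ?b / 2 + ?c / 2"
    by (simp add: summand_def)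
  moreover have "\<bar>?a + ?b / 2 + ?c / 2\<bar> \<le> \<bar>?a\<bar> + \<bar>?b\<bar> / 2 + \<bar>?c\<bar> / 2"
    by linarith
  ultimately show ?thesis
    unfolding power2_eq_square by linarith
qed

lemma abs_truncated_summand_le:
  assumes "0 < f y" and "\<bar>summand f fXY k l x y\<bar> \<le> B"
  shows "\<bar>truncated_summand c f fXY k l x y\<bar> \<le> B"
proof -
  have "(f y / max (f y) c)\<^sup>2 \<le> 1"
    using assms(1) by (simp add: power_le_one)
  then show ?thesis
    using assms by (simp add: truncated_summand_eq abs_mult mult_le_one order_trans[OF mult_right_mono])
qed

lemma abs_truncated_summand_minus_summand_le:
  assumes "0 < f y" and "\<bar>summand f fXY k l x y\<bar> \<le> B"
  shows "\<bar>truncated_summand c f fXY k l x y - summand f fXY k l x y\<bar> \<le> B"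
proof -
  define t where "t = f y / max (f y) c"
  have "0 \<le> t" "t \<le> 1"
    using \<open>0 < f y\<close> by (auto simp: t_def)
  then have "\<bar>t\<^sup>2 - 1\<bar> \<le> 1"
    by (simp add: abs_le_iff power_le_one)
  then have "\<bar>t\<^sup>2 - 1\<bar> * \<bar>summand f fXY k l x y\<bar> \<le> 1 * B"
    using assms(2) by (intro mult_mono) auto
  moreover have "truncated_summand c f fXY k l x y - summand f fXY k l x y = (t\<^sup>2 - 1) * summand f fXY k l x y"
    using assms(1) by (simp add: truncated_summand_eq t_def algebra_simps)
  ultimately show ?thesis
    by (simp add: abs_mult)
qed

lemma borel_measurable_summands:
  fixes X :: "'a \<Rightarrow> real ^ 'd"
  assumes [measurable]: "f \<in> borel_measurable borel" "\<And>j. gfun fXY j \<in> borel_measurable borel"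
    "X \<in> borel_measurable M" "Y \<in> borel_measurable M"
  shows "(\<lambda>\<omega>. summand f fXY k l (X \<omega>) (Y \<omega>)) \<in> borel_measurable M"
    and "(\<lambda>\<omega>. truncated_summand c f fXY k l (X \<omega>) (Y \<omega>)) \<in> borel_measurable M"
proof -
  have [measurable]: "(\<lambda>y. Rfun f fXY j y) \<in> borel_measurable borel" for j
    unfolding Rfun_def by measurable
  have [measurable]: "(\<lambda>y. Rbfun c f fXY j y) \<in> borel_measurable borel" for j
    unfolding Rbfun_def by measurable
  have [measurable]: "(\<lambda>\<omega>. X \<omega> $ j) \<in> borel_measurable M" for j
    by (rule measurable_compose[OF _ borel_measurable_nth]) measurable
  show "(\<lambda>\<omega>. summand f fXY k l (X \<omega>) (Y \<omega>)) \<in> borel_measurable M"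
    unfolding summand_def by measurable
  show "(\<lambda>\<omega>. truncated_summand c f fXY k l (X \<omega>) (Y \<omega>)) \<in> borel_measurable M"
    unfolding truncated_summand_def by measurable
qed

lemma integrable_summands:
  fixes X :: "'a \<Rightarrow> real ^ 'd"
  assumes "finite_measure M"
    and [measurable]: "X \<in> borel_measurable M" "Y \<in> borel_measurable M"
      "f \<in> borel_measurable borel" "\<And>j. gfun fXY j \<in> borel_measurable borel"
    and f_pos: "\<forall>y. 0 < f y"
    and summand_bound: "AE \<omega> in M. \<bar>summand f fXY k l (X \<omega>) (Y \<omega>)\<bar> \<le> B"
  shows "integrable M (\<lambda>\<omega>. summand f fXY k l (X \<omega>) (Y \<omega>))"
    and "integrable M (\<lambda>\<omega>. truncated_summand c f fXY k l (X \<omega>) (Y \<omega>))"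
proof -
  interpret finite_measure M by fact
  show "integrable M (\<lambda>\<omega>. summand f fXY k l (X \<omega>) (Y \<omega>))"
    by (rule integrable_const_bound[where B=B]) (simp_all add: summand_bound borel_measurable_summands)
  have "AE \<omega> in M. \<bar>truncated_summand c f fXY k l (X \<omega>) (Y \<omega>)\<bar> \<le> B"
    using summand_bound by eventually_elim (rule abs_truncated_summand_le[where f=f, OF f_pos[rule_format]])
  then show "integrable M (\<lambda>\<omega>. truncated_summand c f fXY k l (X \<omega>) (Y \<omega>))"
    by (intro integrable_const_bound[where B=B]) (simp_all add: borel_measurable_summands)
qed

lemma AE_abs_summand_le:
  fixes X :: "'a \<Rightarrow> real ^ 'd"
  assumes "prob_space M"
    and Y_dens: "distributed M lborel Y (\<lambda>y. ennreal (f y))" and f_pos: "\<forall>y. 0 < f y"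
    and joint_dens: "\<forall>j. distributed M (lborel \<Otimes>\<^sub>M lborel) (\<lambda>\<omega>. (X \<omega> $ j, Y \<omega>))
                          (\<lambda>p. ennreal (fXY j (fst p) (snd p)))"
    and fXY_nonneg: "\<forall>j x y. 0 \<le> fXY j x y"
    and X_bound: "\<forall>j. \<forall>\<omega>\<in>space M. \<bar>X \<omega> $ j\<bar> \<le> G"
  shows "AE \<omega> in M. \<bar>summand f fXY k l (X \<omega>) (Y \<omega>)\<bar> \<le> 2 * G\<^sup>2"
proof -
  have R_bound: "AE y in lborel. \<bar>Rfun f fXY j y\<bar> \<le> G" for j
    by (rule AE_abs_Rfun_le[where fXY=fXY and j=j, OF \<open>prob_space M\<close> Y_dens f_pos joint_dens[rule_format]])
      (use fXY_nonneg X_bound in auto)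
  show ?thesis
    using AE_comp_of_distributed[OF Y_dens R_bound[of k]] AE_comp_of_distributed[OF Y_dens R_bound[of l]]
      AE_space
    by eventually_elim (use X_bound in \<open>auto intro: abs_summand_le\<close>)
qed

lemma integral_summand:
  fixes X :: "'a \<Rightarrow> real ^ 'd"
  assumes "prob_space M"
    and Y_dens: "distributed M lborel Y (\<lambda>y. ennreal (f y))" and f_pos: "\<forall>y. 0 < f y"
    and joint_dens: "\<forall>j. distributed M (lborel \<Otimes>\<^sub>M lborel) (\<lambda>\<omega>. (X \<omega> $ j, Y \<omega>))
                          (\<lambda>p. ennreal (fXY j (fst p) (snd p)))"
    and fXY_nonneg: "\<forall>j x y. 0 \<le> fXY j x y"
    and X_bound: "\<forall>j. \<forall>\<omega>\<in>space M. \<bar>X \<omega> $ j\<bar> \<le> G"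
  shows "(\<integral>\<omega>. summand f fXY k l (X \<omega>) (Y \<omega>) \<partial>M)
    = 2 * (\<integral>\<omega>. Rfun f fXY k (Y \<omega>) * Rfun f fXY l (Y \<omega>) \<partial>M)"
proof -
  interpret prob_space M by fact
  have [measurable]: "f \<in> borel_measurable borel"
    using distributed_real_measurable[OF _ Y_dens] f_pos by (simp add: less_imp_le)
  have [measurable]: "gfun fXY j \<in> borel_measurable borel" for j
    using borel_measurable_gfun[where fXY=fXY and j=j, OF joint_dens[rule_format]] fXY_nonneg by simp
  have [measurable]: "(\<lambda>y. Rfun f fXY j y) \<in> borel_measurable borel" for j
    unfolding Rfun_def by measurable
  have [measurable]: "Y \<in> borel_measurable M"
    using distributed_measurable[OF Y_dens] by simp
  have [measurable]: "(\<lambda>\<omega>. X \<omega> $ j) \<in> borel_measurable M" for j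
    using distributed_measurable[OF joint_dens[rule_format, of j]] by (simp add: measurable_pair_iff o_def)
  have R_bound: "AE y in lborel. \<bar>Rfun f fXY j y\<bar> \<le> G" for j
    by (rule AE_abs_Rfun_le[where fXY=fXY and j=j, OF \<open>prob_space M\<close> Y_dens f_pos joint_dens[rule_format]])
      (use fXY_nonneg X_bound in auto)
  have tower: "(\<integral>\<omega>. X \<omega> $ j * Rfun f fXY i (Y \<omega>) \<partial>M) = (\<integral>\<omega>. Rfun f fXY j (Y \<omega>) * Rfun f fXY i (Y \<omega>) \<partial>M)"
    for i j
    by (rule integral_mult_eq_Rfun[where fXY=fXY and j=j, OF \<open>prob_space M\<close> Y_dens f_pos
          joint_dens[rule_format] _ _ _ R_bound]) (use fXY_nonneg X_bound in \<open>auto simp: Rfun_def\<close>)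
  have RZ_integrable: "integrable M (\<lambda>\<omega>. Z \<omega> * Rfun f fXY i (Y \<omega>))"
    if [measurable]: "Z \<in> borel_measurable M" and Z_bound: "AE \<omega> in M. \<bar>Z \<omega>\<bar> \<le> G" for Z i
  proof (rule integrable_const_bound[where B="G * G"])
    show "AE \<omega> in M. norm (Z \<omega> * Rfun f fXY i (Y \<omega>)) \<le> G * G"
      using Z_bound AE_comp_of_distributed[OF Y_dens R_bound[of i]]
      by eventually_elim (auto simp: abs_mult intro!: mult_mono)
  qed measurable
  have "integrable M (\<lambda>\<omega>. Rfun f fXY j (Y \<omega>) * Rfun f fXY i (Y \<omega>))" for i j
    by (rule RZ_integrable) (measurable, rule AE_comp_of_distributed[OF Y_dens R_bound])
  moreover have "integrable M (\<lambda>\<omega>. X \<omega> $ j * Rfun f fXY i (Y \<omega>))" for i j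
    by (rule RZ_integrable) (measurable, use X_bound in \<open>auto intro!: AE_I2\<close>)
  ultimately show ?thesis
    using tower[of k l] tower[of l k] by (simp add: summand_def mult.assoc mult.commute)
qed

lemma o_p_one_truncation_error:
  fixes X :: "'a \<Rightarrow> real ^ 'd" and Xs :: "nat \<Rightarrow> 'a \<Rightarrow> real ^ 'd"
  assumes "prob_space M"
    and indep: "prob_space.indep_vars M (\<lambda>_. borel) (\<lambda>i \<omega>. (Xs i \<omega>, Ys i \<omega>)) UNIV"
    and ident: "\<forall>i. distr M borel (\<lambda>\<omega>. (Xs i \<omega>, Ys i \<omega>)) = distr M borel (\<lambda>\<omega>. (X \<omega>, Y \<omega>))"
    and [measurable]: "X \<in> borel_measurable M" "Y \<in> borel_measurable M"
      "f \<in> borel_measurable borel" "\<And>j. gfun fXY j \<in> borel_measurable borel"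
    and f_pos: "\<forall>y. 0 < f y" and b_lim: "b \<longlonglongrightarrow> 0"
    and summand_bound: "AE \<omega> in M. \<bar>summand f fXY k l (X \<omega>) (Y \<omega>)\<bar> \<le> B"
  shows "o_p_one M (\<lambda>n \<omega>. 1 / sqrt (real n) * (\<Sum>i\<in>{1..n}.
           (truncated_summand (b n) f fXY k l (Xs i \<omega>) (Ys i \<omega>) - summand f fXY k l (Xs i \<omega>) (Ys i \<omega>))
           - ((\<integral>\<omega>'. truncated_summand (b n) f fXY k l (X \<omega>') (Y \<omega>') \<partial>M)
              - (\<integral>\<omega>'. summand f fXY k l (X \<omega>') (Y \<omega>') \<partial>M))))"
proof -
  interpret prob_space M by fact
  define H where "H n p = truncated_summand (b n) f fXY k l (fst p) (snd p) - summand f fXY k l (fst p) (snd p)"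
    for n p
  have "o_p_one M (\<lambda>n \<omega>. 1 / sqrt (real n) * (\<Sum>i\<in>{1..n}. H n (Xs i \<omega>, Ys i \<omega>) - (\<integral>\<omega>'. H n (X \<omega>', Y \<omega>') \<partial>M)))"
  proof (rule o_p_one_normalized_iid_sum[OF \<open>prob_space M\<close> indep ident])
    show "(\<lambda>\<omega>. (X \<omega>, Y \<omega>)) \<in> borel_measurable M"
      by measurable
    show "H n \<in> borel_measurable borel" for n
      unfolding H_def[abs_def] borel_prod[symmetric]
      by (intro borel_measurable_diff; rule borel_measurable_summands; measurable)
    show "AE \<omega> in M. \<forall>n. \<bar>H n (X \<omega>, Y \<omega>)\<bar> \<le> B"
      using summand_bound
      by eventually_elim (simp add: H_def abs_truncated_summand_minus_summand_le f_pos)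
    show "AE \<omega> in M. (\<lambda>n. H n (X \<omega>, Y \<omega>)) \<longlonglongrightarrow> 0"
    proof (rule AE_I2)
      fix \<omega>
      have "\<forall>\<^sub>F n in sequentially. b n < f (Y \<omega>)"
        using order_tendstoD(2)[OF b_lim] f_pos by simp
      then have "\<forall>\<^sub>F n in sequentially. H n (X \<omega>, Y \<omega>) = 0"
        by eventually_elim (simp add: H_def truncated_summand_eq_summand f_pos)
      then show "(\<lambda>n. H n (X \<omega>, Y \<omega>)) \<longlonglongrightarrow> 0"
        by (rule tendsto_eventually)
    qed
  qed
  then show ?thesis
    using integrable_summands[OF finite_measure_axioms _ _ _ _ f_pos summand_bound]
    by (simp add: H_def)
qed

lemma scaled_centered_sum_diff:
  fixes c x x' :: real
  shows "c * (\<Sum>i\<in>I. a i - x) - c * (\<Sum>i\<in>I. a' i - x') = c * (\<Sum>i\<in>I. (a i - a' i) - (x - x'))"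
proof -
  have "(\<Sum>i\<in>I. a i - x) - (\<Sum>i\<in>I. a' i - x') = (\<Sum>i\<in>I. (a i - a' i) - (x - x'))"
    unfolding sum_subtractf[symmetric] by (rule sum.cong) auto
  then show ?thesis
    by (simp add: right_diff_distrib[symmetric])
qed

theorem lemma9:
  fixes M :: "'a measure" and X :: "'a \<Rightarrow> real ^ 'd" and Y :: "'a \<Rightarrow> real"
    and Xs :: "nat \<Rightarrow> 'a \<Rightarrow> real ^ 'd" and Ys :: "nat \<Rightarrow> 'a \<Rightarrow> real"
    and f :: "real \<Rightarrow> real" and fXY :: "'d \<Rightarrow> real \<Rightarrow> real \<Rightarrow> real"
    and \<phi> \<psi> \<Phi> :: "real \<Rightarrow> real" and jn :: "nat \<Rightarrow> int" and b :: "nat \<Rightarrow> real"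
    and G c1 c2 :: real and k l :: 'd
  assumes P: "prob_space M"
    and X_rv: "X \<in> borel_measurable M"
    and Y_dens: "distributed M lborel Y (\<lambda>y. ennreal (f y))"
    and f_pos: "\<forall>y. 0 < f y"
    and fXY_nonneg: "\<forall>j x y. 0 \<le> fXY j x y"
    and joint_dens: "\<forall>j. distributed M (lborel \<Otimes>\<^sub>M lborel) (\<lambda>\<omega>. (X \<omega> $ j, Y \<omega>))
                          (\<lambda>p. ennreal (fXY j (fst p) (snd p)))"
    and f_L2: "L2 f" and g_L2: "\<forall>j. L2 (gfun fXY j)"
    and sample_indep: "prob_space.indep_vars M (\<lambda>_. borel) (\<lambda>i \<omega>. (Xs i \<omega>, Ys i \<omega>)) UNIV"
    and sample_distr: "\<forall>i. distr M borel (\<lambda>\<omega>. (Xs i \<omega>, Ys i \<omega>)) = distr M borel (\<lambda>\<omega>. (X \<omega>, Y \<omega>))"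
    \<comment> \<open>(A1)\<close>
    and A1: "0 < G" "\<forall>\<omega>\<in>space M. norm (X \<omega>) \<le> G"
    \<comment> \<open>(A2)\<close>
    and A2_f: "thrice_differentiable f" and A2_g: "\<forall>j. thrice_differentiable (gfun fXY j)"
    and A2_lip: "\<exists>U c. open U \<and> 0 \<in> U \<and> 0 < c \<and>
        (\<forall>y u. u \<in> U \<longrightarrow>
           \<bar>(deriv ^^ 3) f (y + u) - (deriv ^^ 3) f y\<bar> \<le> c * \<bar>u\<bar> \<and>
           (\<forall>j. \<bar>(deriv ^^ 3) (gfun fXY j) (y + u) - (deriv ^^ 3) (gfun fXY j) y\<bar> \<le> c * \<bar>u\<bar>))"
    \<comment> \<open>(A4)\<close>
    and A4_onb: "is_wavelet_ONB \<phi> \<psi>"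
    and A4: "bounded (range \<phi>)" "bounded (range \<psi>)" "compact_support \<phi>" "compact_support \<psi>"
    \<comment> \<open>(A5)\<close>
    and A5_dom: "\<forall>x y. \<bar>wavelet_kernel \<phi> x y\<bar> \<le> \<Phi> (x - y)"
    and A5_Phi: "\<forall>u. 0 \<le> \<Phi> u" "bounded (range \<Phi>)" "compact_support \<Phi>" "\<forall>u. \<Phi> (- u) = \<Phi> u"
    and A5_int: "integrable lborel (\<lambda>u. u^2 * (\<Phi> u)^2)"
       "\<forall>m\<in>{0,1,4::nat}. integrable lborel (\<lambda>u. \<bar>u\<bar>^m * \<Phi> u)"
    and A5_mom: "\<forall>x. \<forall>m\<in>{1,2,3::nat}. (\<integral>y. wavelet_kernel \<phi> x y * (y - x)^m \<partial>lborel) = 0"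
    \<comment> \<open>(A6)\<close>
    and A6_j: "mono jn" "filterlim jn at_top sequentially"
    and A6_b: "\<forall>n. 0 < b n" "b \<longlonglongrightarrow> 0"
    and A6_rates: "seq_equiv (\<lambda>n. 2 powr (- real_of_int (jn n))) (\<lambda>n. real n powr (- c1))"
       "seq_equiv b (\<lambda>n. real n powr (- c2))"
    and A6_c: "0 < c2" "c2 < 1/10" "1/8 + c2/4 < c1" "c1 < 1/4 - c2"
    \<comment> \<open>(A7)\<close>
    and A7_sq: "\<forall>j. integrable M (\<lambda>\<omega>. (Rfun f fXY j (Y \<omega>))^2)"
    and A7_tail: "\<forall>k' l' (a :: nat \<Rightarrow> real). (\<forall>n. 0 < a n) \<and> seq_equiv a b \<longrightarrow>
        (\<lambda>n. sqrt (real n) * (\<integral>\<omega>. \<bar>Rfun f fXY k' (Y \<omega>) * Rfun f fXY l' (Y \<omega>)\<bar> *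
               (if f (Y \<omega>) \<le> a n then 1 else 0) \<partial>M)) \<longlonglongrightarrow> 0"
  shows "o_p_one M (\<lambda>n \<omega>.
     1 / sqrt (real n) * (\<Sum>i\<in>{1..n}.
        (Rbfun (b n) f fXY k (Ys i \<omega>) * Rbfun (b n) f fXY l (Ys i \<omega>)
         + Xs i \<omega> $ l * Rbfun (b n) f fXY k (Ys i \<omega>) * f (Ys i \<omega>) / (2 * max (f (Ys i \<omega>)) (b n))
         + Xs i \<omega> $ k * Rbfun (b n) f fXY l (Ys i \<omega>) * f (Ys i \<omega>) / (2 * max (f (Ys i \<omega>)) (b n)))
        - (\<integral>\<omega>'. Rbfun (b n) f fXY k (Y \<omega>') * Rbfun (b n) f fXY l (Y \<omega>')
         + X \<omega>' $ l * Rbfun (b n) f fXY k (Y \<omega>') * f (Y \<omega>') / (2 * max (f (Y \<omega>')) (b n))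
         + X \<omega>' $ k * Rbfun (b n) f fXY l (Y \<omega>') * f (Y \<omega>') / (2 * max (f (Y \<omega>')) (b n)) \<partial>M))
   - 1 / sqrt (real n) * (\<Sum>i\<in>{1..n}.
        Rfun f fXY k (Ys i \<omega>) * Rfun f fXY l (Ys i \<omega>)
        + 1/2 * Xs i \<omega> $ l * Rfun f fXY k (Ys i \<omega>)
        + 1/2 * Xs i \<omega> $ k * Rfun f fXY l (Ys i \<omega>)
        - 2 * (\<integral>\<omega>'. Rfun f fXY k (Y \<omega>') * Rfun f fXY l (Y \<omega>') \<partial>M)))"
proof -
  have [measurable]: "f \<in> borel_measurable borel" "gfun fXY j \<in> borel_measurable borel" for j
    using f_L2 g_L2 by (simp_all add: L2_def)
  have Y_meas: "Y \<in> borel_measurable M"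
    using distributed_measurable[OF Y_dens] by simp
  have X_bound: "\<forall>j. \<forall>\<omega>\<in>space M. \<bar>X \<omega> $ j\<bar> \<le> G"
    using A1(2) component_le_norm_cart order_trans by blast
  have "AE \<omega> in M. \<bar>summand f fXY k l (X \<omega>) (Y \<omega>)\<bar> \<le> 2 * G\<^sup>2"
    by (rule AE_abs_summand_le[OF P Y_dens f_pos joint_dens fXY_nonneg X_bound])
  then have "o_p_one M (\<lambda>n \<omega>. 1 / sqrt (real n) * (\<Sum>i\<in>{1..n}.
      (truncated_summand (b n) f fXY k l (Xs i \<omega>) (Ys i \<omega>) - summand f fXY k l (Xs i \<omega>) (Ys i \<omega>))
      - ((\<integral>\<omega>'. truncated_summand (b n) f fXY k l (X \<omega>') (Y \<omega>') \<partial>M)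
         - (\<integral>\<omega>'. summand f fXY k l (X \<omega>') (Y \<omega>') \<partial>M))))"
    by (intro o_p_one_truncation_error[OF P sample_indep sample_distr X_rv Y_meas] f_pos A6_b(2)) auto
  then show ?thesis
    unfolding integral_summand[OF P Y_dens f_pos joint_dens fXY_nonneg X_bound]
    by (rule back_subst[of "o_p_one M"])
      (simp only: fun_eq_iff scaled_centered_sum_diff truncated_summand_def summand_def, simp)
qed

end
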